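(* Let $\alpha=\tfrac12$, $K>0$, and let $\{\mu_n\}_{n\in\mathbb N}$ and $\mu$ be in $\mathcal P(\mathbb T\times\mathbb R)$ with $\mu_n\to\mu$ narrowly. Then $$\lim_{n\to\infty}\sup_{\Omega\in\mathbb R}|\mathcal V[\mu_n](z,\Omega)-\mathcal V[\mu](z,\Omega)|=0$$ for every $z\in\mathbb T$ which is a continuity point of the marginal $(\pi_z)_\#\mu$ (i.e. $(\pi_z)_\#\mu(\{z\})=0$). In particular this holds for almost every $z\in\mathbb T$.
   Context: $\mathbb T$ is the unit circle identified with $(-\pi,\pi]$ via $z=e^{i\theta}$; $|\theta|_o$ = absolute value of the representative of $\theta$ mod $2\pi$ in $(-\pi,\pi]$; $\pi_z(z,\Omega)=z$. Critical kernel $h(\theta)=\sin\theta/|\theta|_o$, $\theta\notin2\pi\mathbb Z$. For a finite measure $\mu$: $\mathcal P[\mu](\theta,\Omega)=\Omega-K\int_{(\mathbb T\setminus\{e^{i\theta}\})\times\mathbb R}h(\theta-\theta')\,d\mu(\theta',\Omega')$ and $\mathcal V[\mu](z,\Omega)=(\mathcal P[\mu](z,\Omega)\,iz,0)$, a tangent vector to $\mathbb T\times\mathbb R$ at $(z,\Omega)$, whose norm is taken in the product Riemannian metric. Narrow convergence means convergence against all bounded continuous functions. *)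

theory Defs
  imports "HOL-Probability.Probability"
begin

text \<open>The circle T is the unit circle in the complex plane; points of T x R are
  pairs (z, Omega) :: complex \<times> real.  Angles: z = cis theta.\<close>

definition circ :: "complex set" where
  "circ = sphere 0 1"

text \<open>|theta|_o : absolute value of the representative of theta mod 2 pi in (-pi, pi].\<close>
definition abs_o :: "real \<Rightarrow> real" where
  "abs_o \<theta> = \<bar>\<theta> - 2 * pi * of_int \<lceil>(\<theta> - pi) / (2 * pi)\<rceil>\<bar>"

text \<open>Critical kernel (alpha = 1/2).\<close>
definition hker :: "real \<Rightarrow> real" where
  "hker \<theta> = sin \<theta> / abs_o \<theta>"

text \<open>P[mu](theta, Omega), with theta the angle of z = cis theta (Arg gives the
  angle in (-pi, pi]); the integral is over (T minus {z}) x R.\<close>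
definition Pfield :: "real \<Rightarrow> (complex \<times> real) measure \<Rightarrow> complex \<Rightarrow> real \<Rightarrow> real" where
  "Pfield K \<mu> z \<Omega> =
     \<Omega> - K * (LINT x : {x. fst x \<noteq> z} | \<mu>. hker (Arg z - Arg (fst x)))"

text \<open>V[mu](z, Omega) = (P[mu](z,Omega) i z, 0), a tangent vector to T x R at (z,Omega),
  viewed in the ambient space C x R (product Euclidean norm = product Riemannian metric).\<close>
definition Vfield :: "real \<Rightarrow> (complex \<times> real) measure \<Rightarrow> complex \<Rightarrow> real \<Rightarrow> complex \<times> real" where
  "Vfield K \<mu> z \<Omega> = (complex_of_real (Pfield K \<mu> z \<Omega>) * (\<i> * z), 0)"

definition prob_TR :: "(complex \<times> real) measure \<Rightarrow> bool" where
  "prob_TR \<mu> \<longleftrightarrow> prob_space \<mu> \<and> sets \<mu> = sets borel \<and> \<mu> (circ \<times> UNIV) = 1"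

definition narrow_conv :: "(nat \<Rightarrow> (complex \<times> real) measure) \<Rightarrow> (complex \<times> real) measure \<Rightarrow> bool" where
  "narrow_conv \<mu>s \<mu> \<longleftrightarrow>
     (\<forall>f :: complex \<times> real \<Rightarrow> real. continuous_on UNIV f \<and> bounded (range f) \<longrightarrow>
        (\<lambda>n. integral\<^sup>L (\<mu>s n) f) \<longlonglongrightarrow> integral\<^sup>L \<mu> f)"

end

theory Submission
  imports Defs "HOL-Complex_Analysis.Cauchy_Integral_Theorem"
begin

text \<open>For \<open>z\<close> on the circle, \<open>V[\<mu>](z,\<Omega>) - V[\<nu>](z,\<Omega>)\<close> does not depend on \<open>\<Omega>\<close>: its norm is \<open>K\<close> times
  the difference of the integrals of \<open>x \<mapsto> h(arg z - arg x)\<close> under \<open>\<mu>\<close> and \<open>\<nu>\<close>. This kernel is bounded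
  and, on the circle, continuous away from \<open>z\<close>. Multiplying it by one minus a continuous bump around
  \<open>z\<close> gives a bounded continuous function whose distance to the kernel on the circle is at most the
  bump. When \<open>z\<close> is not an atom of the marginal of \<open>\<mu>\<close>, the bump has arbitrarily small \<open>\<mu>\<close>-integral
  by dominated convergence, and narrow convergence applied to the approximant and to the bump gives
  convergence of the integrals. Finally, a probability measure has countably many atoms, and their
  preimage under \<open>cis\<close> is countable, hence Lebesgue-null.\<close>

lemma hker_eq_arccos_cos: "hker \<theta> = sin \<theta> / arccos (cos \<theta>)"
proof -
  define k where "k = \<lceil>(\<theta> - pi) / (2 * pi)\<rceil>"
  define r where "r = \<theta> - 2 * pi * of_int k"
  have "(\<theta> - pi) / (2 * pi) \<le> of_int k" "of_int k < (\<theta> - pi) / (2 * pi) + 1"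
    unfolding k_def by linarith+
  then have "\<theta> - pi \<le> 2 * pi * of_int k" "2 * pi * of_int k < \<theta> + pi"
    using pi_gt_zero by (simp_all add: divide_le_eq less_divide_eq field_simps)
  then have "\<bar>r\<bar> \<le> pi"
    unfolding r_def by auto
  moreover have "cos \<theta> = cos r"
    unfolding r_def by (simp add: cos_diff)
  ultimately have "abs_o \<theta> = arccos (cos \<theta>)"
    using arccos_cos_eq_abs unfolding abs_o_def r_def k_def by simp
  then show ?thesis
    unfolding hker_def by simp
qed

lemma abs_hker_le_1: "\<bar>hker \<theta>\<bar> \<le> 1"
proof -
  obtain k :: int where k: "arccos (cos \<theta>) = \<bar>\<theta> - of_int k * (2 * pi)\<bar>"
    using arccos_cos_eq_abs_2pi by blast
  have "sin \<theta> = sin (\<theta> - of_int k * (2 * pi))"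
    by (simp add: sin_diff mult.commute[of _ "2 * pi"])
  then have "\<bar>sin \<theta>\<bar> \<le> arccos (cos \<theta>)"
    using k abs_sin_x_le_abs_x by simp
  then show ?thesis
    unfolding hker_eq_arccos_cos using k by (simp add: abs_divide divide_le_eq_1)
qed

lemma borel_measurable_Arg [measurable]: "Arg \<in> borel_measurable borel"
proof -
  have "(\<lambda>z. if z = 0 then 0 else Im (Ln z)) \<in> borel_measurable borel"
    by measurable
  then show ?thesis
    by (simp add: Arg_def[abs_def])
qed

lemma borel_measurable_hker [measurable]: "hker \<in> borel_measurable borel"
  unfolding hker_def[abs_def] abs_o_def by measurable

text \<open>The kernel written through \<open>w * cnj z\<close>, which equals \<open>cis (Arg w - Arg z)\<close> on the circle and,
  unlike \<open>Arg\<close>, is continuous in \<open>w\<close>; clipping the argument of \<open>arccos\<close> only matters off the circle.\<close>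

definition hker_ext :: "complex \<Rightarrow> complex \<Rightarrow> real" where
  "hker_ext z w = - Im (w * cnj z) / arccos (max (-1) (min 1 (Re (w * cnj z))))"

lemma hker_Arg_diff_eq_hker_ext:
  assumes "norm z = 1" "norm w = 1"
  shows "hker (Arg z - Arg w) = hker_ext z w"
proof -
  have "z \<noteq> 0" "w \<noteq> 0"
    using assms by auto
  then have "cis (Arg z) = z" "cis (Arg w) = w"
    using assms by (simp_all add: cis_Arg sgn_div_norm)
  define \<theta> where "\<theta> = Arg z - Arg w"
  have "w * cnj z = cis (Arg w) * cis (- Arg z)"
    using \<open>cis (Arg z) = z\<close> \<open>cis (Arg w) = w\<close> cis_cnj[of "Arg z"] by simp
  also have "\<dots> = cis (- \<theta>)"
    by (simp add: cis_mult \<theta>_def)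
  finally have "w * cnj z = cis (- \<theta>)" .
  then show ?thesis
    unfolding hker_ext_def hker_eq_arccos_cos \<theta>_def[symmetric]
    by (simp add: abs_cos_le_one[unfolded abs_le_iff])
qed

lemma Re_mult_cnj_less_1:
  assumes "norm z = 1" "norm w = 1" "w \<noteq> z"
  shows "Re (w * cnj z) < 1"
proof -
  have norm_u: "norm (w * cnj z) = 1"
    using assms by (simp add: norm_mult)
  have "Re (w * cnj z) \<noteq> 1"
  proof
    assume "Re (w * cnj z) = 1"
    with norm_u have "w * cnj z = 1"
      by (simp add: cmod_def complex_eq_iff)
    moreover have "cnj z * z = 1"
      using complex_norm_square[of z] assms by (simp add: mult.commute)
    ultimately have "w = z"
      by (metis mult.assoc mult_1_left mult_1_right)
    with assms show False by simp
  qed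
  with norm_u complex_Re_le_cmod[of "w * cnj z"] show ?thesis
    by simp
qed

lemma isCont_arccos_clip: "isCont (\<lambda>y. arccos (max (-1) (min 1 y))) y"
proof -
  have "continuous_on UNIV (\<lambda>y::real. arccos (max (-1) (min 1 y)))"
    by (rule continuous_on_compose2[OF continuous_on_arccos']) (auto intro!: continuous_intros)
  then show ?thesis
    by (simp add: continuous_on_eq_continuous_at)
qed

lemma isCont_hker_ext:
  assumes "Re (w * cnj z) < 1"
  shows "isCont (hker_ext z) w"
proof -
  have "max (-1) (min 1 (Re (w * cnj z))) \<in> {-1..1}" "max (-1) (min 1 (Re (w * cnj z))) \<noteq> 1"
    using assms by auto
  then have "arccos (max (-1) (min 1 (Re (w * cnj z)))) \<noteq> 0"
    using arccos_eq_0_iff by blast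
  moreover have "isCont (\<lambda>w. arccos (max (-1) (min 1 (Re (w * cnj z))))) w"
    by (rule isCont_o2[OF _ isCont_arccos_clip]) (intro continuous_Re continuous_intros)
  ultimately show ?thesis
    unfolding hker_ext_def by (intro isCont_divide continuous_Re continuous_Im continuous_intros)
qed

text \<open>On the circle \<open>1 - Re (w * cnj z) = \<bar>w - z\<bar>\<^sup>2 / 2\<close>, so \<open>cutoff d z\<close> is a bump around \<open>z\<close>
  of width about \<open>sqrt d\<close>; it equals 1 on the whole half-plane where \<open>hker_ext z\<close> may be discontinuous.\<close>

definition cutoff :: "real \<Rightarrow> complex \<Rightarrow> complex \<Rightarrow> real" where
  "cutoff d z w = min 1 (max 0 (2 - (1 - Re (w * cnj z)) / d))"

definition hker_approx :: "real \<Rightarrow> complex \<Rightarrow> complex \<Rightarrow> real" where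
  "hker_approx d z w = max (-1) (min 1 ((1 - cutoff d z w) * hker_ext z w))"

lemma cutoff_bounds: "0 \<le> cutoff d z w" "cutoff d z w \<le> 1"
  unfolding cutoff_def by auto

lemma continuous_on_cutoff: "0 < d \<Longrightarrow> continuous_on UNIV (cutoff d z)"
  unfolding cutoff_def by (intro continuous_intros) auto

lemma continuous_on_hker_approx:
  assumes "0 < d"
  shows "continuous_on UNIV (hker_approx d z)"
proof -
  have "isCont (hker_approx d z) w" for w
  proof (cases "Re (w * cnj z) < 1")
    case True
    then show ?thesis
      unfolding hker_approx_def cutoff_def using assms
      by (intro continuous_Re continuous_intros isCont_hker_ext) auto
  next
    case False
    define U where "U = {v. 1 - d < Re (v * cnj z)}"
    have "cutoff d z v = 1" if "v \<in> U" for v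
    proof -
      have "(1 - Re (v * cnj z)) / d < 1"
        using that assms unfolding U_def by (simp add: divide_less_eq)
      then show ?thesis
        unfolding cutoff_def by simp
    qed
    then have "\<forall>v\<in>U. hker_approx d z v = 0"
      unfolding hker_approx_def by simp
    moreover have "open U" "w \<in> U"
      unfolding U_def using False assms by (auto intro!: open_Collect_less continuous_intros)
    ultimately have "eventually (\<lambda>v. hker_approx d z v = 0) (nhds w)"
      unfolding eventually_nhds by blast
    then show ?thesis
      using isCont_cong[of "hker_approx d z" "\<lambda>_. 0" w] continuous_const by blast
  qed
  then show ?thesis
    by (simp add: continuous_on_eq_continuous_at)
qed

lemma abs_hker_approx_le_1: "\<bar>hker_approx d z w\<bar> \<le> 1"
  unfolding hker_approx_def by auto

lemma abs_hker_approx_error: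
  assumes "norm z = 1" "norm w = 1"
  shows "\<bar>hker (Arg z - Arg w) - hker_approx d z w\<bar> \<le> cutoff d z w"
proof -
  let ?h = "hker_ext z w" and ?c = "cutoff d z w"
  have h: "\<bar>?h\<bar> \<le> 1"
    using abs_hker_le_1 hker_Arg_diff_eq_hker_ext[OF assms] by metis
  note c = cutoff_bounds[of d z w]
  have "\<bar>(1 - ?c) * ?h\<bar> \<le> 1"
    using h c by (simp add: abs_mult mult_le_one)
  then have "hker (Arg z - Arg w) - hker_approx d z w = ?c * ?h"
    unfolding hker_approx_def hker_Arg_diff_eq_hker_ext[OF assms] by (auto simp: algebra_simps)
  also have "\<bar>\<dots>\<bar> \<le> ?c"
    using h c by (simp add: abs_mult mult_left_le)
  finally show ?thesis .
qed

lemma cutoff_tendsto_indicator: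
  assumes "norm z = 1" "norm w = 1"
  shows "(\<lambda>m. cutoff (1 / Suc m) z w) \<longlonglongrightarrow> indicator {z} w"
proof (cases "w = z")
  case True
  have "Re (z * cnj z) = 1"
    using complex_norm_square[of z] assms by simp
  with True show ?thesis
    by (simp add: cutoff_def)
next
  case False
  define r where "r = 1 - Re (w * cnj z)"
  have "0 < r"
    unfolding r_def using Re_mult_cnj_less_1[OF assms False] by simp
  obtain N :: nat where N: "2 / r < N"
    using reals_Archimedean2 by blast
  have "cutoff (1 / Suc m) z w = 0" if "N \<le> m" for m
  proof -
    have "2 < r * N"
      using N \<open>0 < r\<close> by (simp add: divide_less_eq mult.commute)
    also have "\<dots> \<le> r * Suc m"
      using that \<open>0 < r\<close> by simp
    finally have "2 < r * Suc m" .
    then show ?thesis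
      unfolding cutoff_def r_def[symmetric] by simp
  qed
  then have "(\<lambda>m. cutoff (1 / Suc m) z w) \<longlonglongrightarrow> 0"
    by (intro tendsto_eventually) (auto simp: eventually_sequentially)
  with False show ?thesis
    by simp
qed

lemma borel_measurable_fst_borel [measurable]:
  "fst \<in> borel_measurable (borel :: ('a::topological_space \<times> 'b::topological_space) measure)"
  by (intro borel_measurable_continuous_onI continuous_intros)

lemma integrable_bounded_borel:
  fixes f :: "'a::topological_space \<Rightarrow> real"
  assumes "finite_measure M" "sets M = sets borel" "f \<in> borel_measurable borel" "bounded (range f)"
  shows "integrable M f"
proof -
  obtain B where "\<And>x. norm (f x) \<le> B"
    using assms(4) by (auto simp: bounded_iff)
  moreover have "f \<in> borel_measurable M"
    using assms(2,3) measurable_cong_sets by blast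
  ultimately show ?thesis
    using finite_measure.integrable_const_bound[OF assms(1)] by blast
qed

lemma abs_integral_diff_le_AE:
  fixes f g h :: "'a \<Rightarrow> real"
  assumes "integrable M f" "integrable M g" "integrable M h" "AE x in M. \<bar>f x - g x\<bar> \<le> h x"
  shows "\<bar>(\<integral>x. f x \<partial>M) - (\<integral>x. g x \<partial>M)\<bar> \<le> (\<integral>x. h x \<partial>M)"
proof -
  have "\<bar>(\<integral>x. f x \<partial>M) - (\<integral>x. g x \<partial>M)\<bar> = \<bar>\<integral>x. f x - g x \<partial>M\<bar>"
    using assms by simp
  also have "\<dots> \<le> (\<integral>x. \<bar>f x - g x\<bar> \<partial>M)"
    using integral_norm_bound[of M "\<lambda>x. f x - g x"] by simp
  also have "\<dots> \<le> (\<integral>x. h x \<partial>M)"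
    using assms by (intro integral_mono_AE) auto
  finally show ?thesis .
qed

lemma tendsto_integral_of_continuous_sandwich:
  fixes M :: "nat \<Rightarrow> 'a::topological_space measure" and f :: "'a \<Rightarrow> real"
  assumes M: "\<And>n. prob_space (M n)" "\<And>n. sets (M n) = sets borel" "\<And>n. AE x in M n. x \<in> S"
    and N: "prob_space N" "sets N = sets borel" "AE x in N. x \<in> S"
    and weak: "\<And>g :: 'a \<Rightarrow> real. continuous_on UNIV g \<Longrightarrow> bounded (range g) \<Longrightarrow>
      (\<lambda>n. \<integral>x. g x \<partial>M n) \<longlonglongrightarrow> (\<integral>x. g x \<partial>N)"
    and f: "f \<in> borel_measurable borel" "bounded (range f)"
    and approx: "\<And>e. 0 < e \<Longrightarrow> \<exists>g h. continuous_on UNIV g \<and> bounded (range g) \<and>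
      continuous_on UNIV h \<and> bounded (range h) \<and> (\<forall>x\<in>S. \<bar>f x - g x\<bar> \<le> h x) \<and> (\<integral>x. h x \<partial>N) < e"
  shows "(\<lambda>n. \<integral>x. f x \<partial>M n) \<longlonglongrightarrow> (\<integral>x. f x \<partial>N)"
proof (rule tendstoI)
  fix r :: real assume "0 < r"
  then obtain g h where g: "continuous_on UNIV g" "bounded (range g)"
    and h: "continuous_on UNIV h" "bounded (range h)"
    and err: "\<forall>x\<in>S. \<bar>f x - g x\<bar> \<le> h x" and small: "(\<integral>x. h x \<partial>N) < r / 4"
    using approx[of "r / 4"] by auto
  have integrable: "integrable P f" "integrable P g" "integrable P h"
    if "prob_space P" "sets P = sets borel" for P
    using that f g h borel_measurable_continuous_onI
    by (auto intro!: integrable_bounded_borel prob_space.finite_measure)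
  have sandwich: "\<bar>(\<integral>x. f x \<partial>P) - (\<integral>x. g x \<partial>P)\<bar> \<le> (\<integral>x. h x \<partial>P)"
    if "prob_space P" "sets P = sets borel" "AE x in P. x \<in> S" for P
    using integrable[OF that(1,2)] that(3) err by (intro abs_integral_diff_le_AE) auto
  have "0 < r / 4"
    using \<open>0 < r\<close> by simp
  have "eventually (\<lambda>n. dist (\<integral>x. g x \<partial>M n) (\<integral>x. g x \<partial>N) < r / 4) sequentially"
    by (rule tendstoD[OF weak[OF g] \<open>0 < r / 4\<close>])
  moreover have "eventually (\<lambda>n. dist (\<integral>x. h x \<partial>M n) (\<integral>x. h x \<partial>N) < r / 4) sequentially"
    by (rule tendstoD[OF weak[OF h] \<open>0 < r / 4\<close>])
  ultimately show "eventually (\<lambda>n. dist (\<integral>x. f x \<partial>M n) (\<integral>x. f x \<partial>N) < r) sequentially"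
  proof eventually_elim
    case (elim n)
    with sandwich[OF M(1-3)[of n]] sandwich[OF N] small show ?case
      unfolding dist_real_def by linarith
  qed
qed

lemma prob_TRD:
  assumes "prob_TR M"
  shows "prob_space M" "sets M = sets borel" "space M = UNIV" "AE x in M. x \<in> circ \<times> UNIV"
    "borel_measurable M = borel_measurable borel"
proof -
  show M: "prob_space M" and sets: "sets M = sets borel"
    using assms unfolding prob_TR_def by auto
  show "space M = UNIV"
    using sets_eq_imp_space_eq[OF sets] by simp
  show "borel_measurable M = borel_measurable borel"
    by (rule measurable_cong_sets[OF sets refl])
  have "measure M (circ \<times> UNIV) = 1"
    using assms unfolding prob_TR_def by (simp add: measure_def)
  then show "AE x in M. x \<in> circ \<times> UNIV"
    using prob_space.AE_prob_1[OF M] by blast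
qed

lemma integral_cutoff_small:
  assumes \<mu>: "prob_TR \<mu>" and z: "norm z = 1" and atom: "measure \<mu> ({z} \<times> UNIV) = 0" and "0 < e"
  shows "\<exists>d>0. (\<integral>x. cutoff d z (fst x) \<partial>\<mu>) < e"
proof -
  interpret prob_space \<mu>
    using prob_TRD[OF \<mu>] by simp
  have "(\<lambda>m. \<integral>x. cutoff (1 / Suc m) z (fst x) \<partial>\<mu>) \<longlonglongrightarrow> (\<integral>x. indicator ({z} \<times> UNIV) x \<partial>\<mu>)"
  proof (rule integral_dominated_convergence[where w="\<lambda>_. 1"])
    show "(\<lambda>x. cutoff (1 / Suc m) z (fst x)) \<in> borel_measurable \<mu>" for m
      unfolding prob_TRD(5)[OF \<mu>] cutoff_def by measurable
    show "indicator ({z} \<times> UNIV) \<in> borel_measurable \<mu>"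
      unfolding prob_TRD(5)[OF \<mu>] by (intro borel_measurable_indicator borel_closed closed_Times) auto
    show "AE x in \<mu>. norm (cutoff (1 / Suc m) z (fst x)) \<le> 1" for m
      using cutoff_bounds by auto
    show "AE x in \<mu>. (\<lambda>m. cutoff (1 / Suc m) z (fst x)) \<longlonglongrightarrow> indicator ({z} \<times> UNIV) x"
      using prob_TRD(4)[OF \<mu>]
    proof eventually_elim
      case (elim x)
      then show ?case
        using cutoff_tendsto_indicator[OF z, of "fst x"] by (cases x) (auto simp: circ_def indicator_times)
    qed
  qed simp
  moreover have "(\<integral>x. indicator ({z} \<times> UNIV) x \<partial>\<mu>) = (0::real)"
    using atom prob_TRD(3)[OF \<mu>] by simp
  ultimately have "(\<lambda>m. \<integral>x. cutoff (1 / Suc m) z (fst x) \<partial>\<mu>) \<longlonglongrightarrow> 0"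
    by simp
  then have "eventually (\<lambda>m. (\<integral>x. cutoff (1 / Suc m) z (fst x) \<partial>\<mu>) < e) sequentially"
    using \<open>0 < e\<close> by (rule order_tendstoD(2))
  then obtain m where "(\<integral>x. cutoff (1 / Suc m) z (fst x) \<partial>\<mu>) < e"
    by (auto simp: eventually_sequentially)
  then show ?thesis
    by (intro exI[of _ "1 / Suc m"]) auto
qed

lemma tendsto_integral_hker:
  assumes \<mu>s: "\<And>n. prob_TR (\<mu>s n)" and \<mu>: "prob_TR \<mu>" and narrow: "narrow_conv \<mu>s \<mu>"
    and z: "norm z = 1" and atom: "measure \<mu> ({z} \<times> UNIV) = 0"
  shows "(\<lambda>n. \<integral>x. hker (Arg z - Arg (fst x)) \<partial>\<mu>s n) \<longlonglongrightarrow> (\<integral>x. hker (Arg z - Arg (fst x)) \<partial>\<mu>)"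
proof (rule tendsto_integral_of_continuous_sandwich[where S = "circ \<times> UNIV"])
  show "(\<lambda>n. \<integral>x. g x \<partial>\<mu>s n) \<longlonglongrightarrow> (\<integral>x. g x \<partial>\<mu>)"
    if "continuous_on UNIV g" "bounded (range g)" for g :: "complex \<times> real \<Rightarrow> real"
    using narrow that unfolding narrow_conv_def by blast
  show "bounded (range (\<lambda>x. hker (Arg z - Arg (fst x))))"
    using abs_hker_le_1 by (auto simp: bounded_iff)
  fix e :: real assume "0 < e"
  then obtain d where "0 < d" and small: "(\<integral>x. cutoff d z (fst x) \<partial>\<mu>) < e"
    using integral_cutoff_small[OF \<mu> z atom] by blast
  have continuous_fst: "continuous_on UNIV (\<lambda>x::complex \<times> real. f (fst x))"
    if "continuous_on UNIV f" for f :: "complex \<Rightarrow> real"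
    using continuous_on_compose2[OF that continuous_on_fst[OF continuous_on_id]] by simp
  have "continuous_on UNIV (\<lambda>x::complex \<times> real. hker_approx d z (fst x))"
    "continuous_on UNIV (\<lambda>x::complex \<times> real. cutoff d z (fst x))"
    using continuous_on_hker_approx continuous_on_cutoff \<open>0 < d\<close> by (auto intro!: continuous_fst)
  moreover have "bounded (range (\<lambda>x. hker_approx d z (fst x)))" "bounded (range (\<lambda>x. cutoff d z (fst x)))"
    using abs_hker_approx_le_1 cutoff_bounds by (auto simp: bounded_iff intro!: exI[of _ 1])
  moreover have "\<forall>x\<in>circ \<times> UNIV. \<bar>hker (Arg z - Arg (fst x)) - hker_approx d z (fst x)\<bar> \<le> cutoff d z (fst x)"
    using abs_hker_approx_error[OF z] by (auto simp: circ_def)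
  ultimately show "\<exists>g h. continuous_on UNIV g \<and> bounded (range g) \<and> continuous_on UNIV h \<and>
      bounded (range h) \<and> (\<forall>x\<in>circ \<times> UNIV. \<bar>hker (Arg z - Arg (fst x)) - g x\<bar> \<le> h x) \<and>
      (\<integral>x. h x \<partial>\<mu>) < e"
    using small by blast
next
  show "(\<lambda>x. hker (Arg z - Arg (fst x))) \<in> borel_measurable borel"
    by measurable
qed (use prob_TRD[OF \<mu>] prob_TRD[OF \<mu>s] in simp_all)

lemma Pfield_eq_integral: "Pfield K \<mu> z \<Omega> = \<Omega> - K * (\<integral>x. hker (Arg z - Arg (fst x)) \<partial>\<mu>)"
  unfolding Pfield_def set_lebesgue_integral_def
  by (intro arg_cong[where f = "\<lambda>I. \<Omega> - K * I"] Bochner_Integration.integral_cong)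
    (auto simp: indicator_def hker_def)

lemma norm_Vfield_diff:
  assumes "norm z = 1"
  shows "norm (Vfield K M z \<Omega> - Vfield K N z \<Omega>) =
    \<bar>K\<bar> * \<bar>(\<integral>x. hker (Arg z - Arg (fst x)) \<partial>M) - (\<integral>x. hker (Arg z - Arg (fst x)) \<partial>N)\<bar>"
proof -
  have "Vfield K M z \<Omega> - Vfield K N z \<Omega> = (complex_of_real (K * ((\<integral>x. hker (Arg z - Arg (fst x)) \<partial>N) -
      (\<integral>x. hker (Arg z - Arg (fst x)) \<partial>M))) * (\<i> * z), 0)"
    unfolding Vfield_def Pfield_eq_integral by (simp add: algebra_simps)
  then show ?thesis
    using assms by (simp add: norm_mult abs_mult abs_minus_commute flip: of_real_diff)
qed

lemma countable_atoms_prob_TR: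
  assumes "prob_TR \<mu>"
  shows "countable {z. measure \<mu> ({z} \<times> UNIV) \<noteq> 0}"
proof -
  have fst: "fst \<in> measurable \<mu> borel"
    unfolding prob_TRD(5)[OF assms] by (rule borel_measurable_fst_borel)
  interpret prob_space "distr \<mu> borel fst"
    by (rule prob_space.prob_space_distr[OF prob_TRD(1)[OF assms] fst])
  have "measure (distr \<mu> borel fst) {z} = measure \<mu> ({z} \<times> UNIV)" for z
  proof -
    have "measure (distr \<mu> borel fst) {z} = measure \<mu> (fst -` {z} \<inter> space \<mu>)"
      by (rule measure_distr[OF fst]) simp
    also have "fst -` {z} \<inter> space \<mu> = {z} \<times> UNIV"
      using prob_TRD(3)[OF assms] by auto
    finally show ?thesis .
  qed
  then show ?thesis
    using countable_support by simp
qed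

lemma cis_eq_cis_iff: "cis s = cis t \<longleftrightarrow> (\<exists>k::int. s = t + 2 * pi * of_int k)"
proof -
  have "cis s = cis t \<longleftrightarrow> (\<exists>k::int. \<i> * of_real s = \<i> * of_real t + of_int (2 * k) * pi * \<i>)"
    by (simp add: cis_conv_exp exp_eq)
  also have "\<dots> \<longleftrightarrow> (\<exists>k::int. s = t + 2 * pi * of_int k)"
    by (simp add: complex_eq_iff algebra_simps)
  finally show ?thesis .
qed

lemma countable_cis_vimage:
  assumes "countable A"
  shows "countable {t. cis t \<in> A}"
proof -
  have "{t. cis t \<in> A} \<subseteq> (\<lambda>(z, k::int). Arg z + 2 * pi * of_int k) ` (A \<times> UNIV)"
  proof
    fix t assume "t \<in> {t. cis t \<in> A}"
    moreover have "cis t = cis (Arg (cis t))"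
      by (simp add: cis_Arg)
    then obtain k :: int where "t = Arg (cis t) + 2 * pi * of_int k"
      using cis_eq_cis_iff by blast
    ultimately show "t \<in> (\<lambda>(z, k::int). Arg z + 2 * pi * of_int k) ` (A \<times> UNIV)"
      by force
  qed
  then show ?thesis
    using assms countable_subset by fastforce
qed

theorem mainTheorem18:
  fixes K :: real and \<mu>s :: "nat \<Rightarrow> (complex \<times> real) measure" and \<mu> :: "(complex \<times> real) measure"
  assumes "K > 0"
    and "\<And>n. prob_TR (\<mu>s n)" and "prob_TR \<mu>"
    and "narrow_conv \<mu>s \<mu>"
  shows "(\<forall>z \<in> circ. measure \<mu> ({z} \<times> UNIV) = 0 \<longrightarrow>
            (\<lambda>n. SUP \<Omega>. norm (Vfield K (\<mu>s n) z \<Omega> - Vfield K \<mu> z \<Omega>)) \<longlonglongrightarrow> 0)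
       \<and> (AE \<theta> in lborel.
            (\<lambda>n. SUP \<Omega>. norm (Vfield K (\<mu>s n) (cis \<theta>) \<Omega> - Vfield K \<mu> (cis \<theta>) \<Omega>)) \<longlonglongrightarrow> 0)"
proof -
  have conv: "(\<lambda>n. SUP \<Omega>. norm (Vfield K (\<mu>s n) z \<Omega> - Vfield K \<mu> z \<Omega>)) \<longlonglongrightarrow> 0"
    if "z \<in> circ" "measure \<mu> ({z} \<times> UNIV) = 0" for z
  proof -
    have z: "norm z = 1"
      using that(1) by (simp add: circ_def)
    have "(\<lambda>n. \<bar>K\<bar> * \<bar>(\<integral>x. hker (Arg z - Arg (fst x)) \<partial>\<mu>s n) - (\<integral>x. hker (Arg z - Arg (fst x)) \<partial>\<mu>)\<bar>)
        \<longlonglongrightarrow> 0"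
      using tendsto_integral_hker[OF assms(2-4) z that(2)]
      by (intro tendsto_mult_right_zero tendsto_rabs_zero) (simp add: LIM_zero)
    then show ?thesis
      unfolding norm_Vfield_diff[OF z] by simp
  qed
  have atoms: "countable {\<theta>. cis \<theta> \<in> {z. measure \<mu> ({z} \<times> UNIV) \<noteq> 0}}"
    by (intro countable_cis_vimage countable_atoms_prob_TR assms(3))
  have "AE \<theta> in lborel. measure \<mu> ({cis \<theta>} \<times> UNIV) = 0"
    using AE_not_in[OF countable_imp_null_set_lborel[OF atoms]] by simp
  then have "AE \<theta> in lborel.
      (\<lambda>n. SUP \<Omega>. norm (Vfield K (\<mu>s n) (cis \<theta>) \<Omega> - Vfield K \<mu> (cis \<theta>) \<Omega>)) \<longlonglongrightarrow> 0"
    by eventually_elim (simp add: conv circ_def)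
  with conv show ?thesis
    by blast
qed

end
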